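(* Let $a\in\mathbf F^{\uparrow}$ with $\mathrm{supp}(a)=(0,r)$, let $\alpha_0\in(0,r)\cap A$, $\alpha_k=(\alpha_0)a^k$ ($k\in\mathbb Z$), and $b\in\mathbf F^{\uparrow}$ with $\mathrm{supp}(b)=(\alpha_0,\alpha_1)$. Let $G$ be a subgroup of $\mathbf V(r,\mathbb R^*_+,\mathbb R)$ with $G\cap\mathbf F(r,\mathbb R^*_+,\mathbb R)=\mathbf F$. Then $C_G(a)=C_{\mathbf F}(a)$ and $C_G(\{a^{-k}ba^k\mid k\in\mathbb Z\})=C_{\mathbf F}(\{a^{-k}ba^k\mid k\in\mathbb Z\})$.
   Context: Maps act on the right. Fix real $r>0$, a subgroup $\Lambda\neq\{1\}$ of $\mathbb R^*_+$, and an additive subgroup $A\subseteq\mathbb R$ with $r\in A$ and $\lambda A\subseteq A$ for $\lambda\in\Lambda$ (definitions also used with $\Lambda=\mathbb R^*_+$, $A=\mathbb R$). $\mathbf V(r,\Lambda,A)$ is the group of bijections $x\colon[0,r)\to[0,r)$ that are piecewise affine with finitely many breakpoints and discontinuities, right-continuous everywhere, with all slopes in $\Lambda$ and all breakpoints, discontinuity points and their images in $A$; $\mathbf F(r,\Lambda,A)$ is the subgroup of elements continuous for the usual topology; $\mathbf F=\mathbf F(r,\Lambda,A)$. $\mathbf F^{\uparrow}=\{x\in\mathbf F\mid(\gamma)x\ge\gamma\ \forall\gamma\}$; $\mathrm{supp}(x)$ is the set of non-fixed points; $C_G(S)$ is the centralizer of $S$ in $G$. *)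

theory Defs
  imports "HOL-Analysis.Analysis" "HOL-Algebra.Group"
begin

text \<open>Elements of V(r,Lambda,A) are represented as functions real => real that
  restrict to bijections of [0,r) and are the identity outside [0,r).
  Maps act on the right, so the group product x*y is "first x, then y",
  i.e. the function composition y o x.\<close>

definition std_params :: "real \<Rightarrow> real set \<Rightarrow> real set \<Rightarrow> bool" where
  "std_params r \<Lambda> A \<longleftrightarrow> r > 0
     \<and> \<Lambda> \<subseteq> {0<..} \<and> 1 \<in> \<Lambda> \<and> (\<forall>x\<in>\<Lambda>. \<forall>y\<in>\<Lambda>. x * y \<in> \<Lambda>)
     \<and> (\<forall>x\<in>\<Lambda>. inverse x \<in> \<Lambda>) \<and> \<Lambda> \<noteq> {1}
     \<and> 0 \<in> A \<and> (\<forall>x\<in>A. \<forall>y\<in>A. x + y \<in> A) \<and> (\<forall>x\<in>A. - x \<in> A)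
     \<and> r \<in> A \<and> (\<forall>l\<in>\<Lambda>. \<forall>x\<in>A. l * x \<in> A)"

text \<open>Piecewise affine with finitely many breakpoints/discontinuities, right-continuous,
  slopes in Lambda, breakpoints, discontinuity points and their images in A:
  there is a finite subdivision 0 = t_0 < ... < t_n = r of points of A such that x is
  affine with slope in Lambda on each [t_i, t_(i+1)) and x(t_i) is in A.\<close>
definition PL_map :: "real \<Rightarrow> real set \<Rightarrow> real set \<Rightarrow> (real \<Rightarrow> real) \<Rightarrow> bool" where
  "PL_map r \<Lambda> A x \<longleftrightarrow> (\<exists>ts :: real list.
      sorted_wrt (<) ts \<and> ts \<noteq> [] \<and> hd ts = 0 \<and> last ts = r \<and> set ts \<subseteq> A
      \<and> (\<forall>i. Suc i < length ts \<longrightarrow>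
             (\<exists>s\<in>\<Lambda>. \<exists>c. \<forall>t\<in>{ts ! i ..< ts ! Suc i}. x t = s * t + c))
      \<and> (\<forall>t\<in>set ts. t < r \<longrightarrow> x t \<in> A))"

definition V_set :: "real \<Rightarrow> real set \<Rightarrow> real set \<Rightarrow> (real \<Rightarrow> real) set" where
  "V_set r \<Lambda> A = {x. bij_betw x {0..<r} {0..<r} \<and> (\<forall>t. t \<notin> {0..<r} \<longrightarrow> x t = t)
                       \<and> PL_map r \<Lambda> A x}"

definition F_set :: "real \<Rightarrow> real set \<Rightarrow> real set \<Rightarrow> (real \<Rightarrow> real) set" where
  "F_set r \<Lambda> A = {x \<in> V_set r \<Lambda> A. continuous_on {0..<r} x}"

definition Vgrp :: "real \<Rightarrow> real set \<Rightarrow> real set \<Rightarrow> (real \<Rightarrow> real) monoid" where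
  "Vgrp r \<Lambda> A = \<lparr>carrier = V_set r \<Lambda> A, mult = (\<lambda>x y. y \<circ> x), one = id\<rparr>"

definition F_up :: "real \<Rightarrow> real set \<Rightarrow> real set \<Rightarrow> (real \<Rightarrow> real) set" where
  "F_up r \<Lambda> A = {x \<in> F_set r \<Lambda> A. \<forall>\<gamma>\<in>{0..<r}. x \<gamma> \<ge> \<gamma>}"

definition supp :: "real \<Rightarrow> (real \<Rightarrow> real) \<Rightarrow> real set" where
  "supp r x = {\<gamma> \<in> {0..<r}. x \<gamma> \<noteq> \<gamma>}"

text \<open>Centralizer of S in H (commuting is symmetric, so action side is irrelevant).\<close>
definition centr :: "(real \<Rightarrow> real) set \<Rightarrow> (real \<Rightarrow> real) set \<Rightarrow> (real \<Rightarrow> real) set" where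
  "centr H S = {g \<in> H. \<forall>s\<in>S. g \<circ> s = s \<circ> g}"

end

theory Submission
  imports Defs
begin

text \<open>
  Let g be an element of G commuting with a (or with all conjugates
  a^-k b a^k).  As an element of V, g is piecewise affine, so it has only finitely many
  points p in (0,r) where it fails to be left-continuous ("left jumps").
  If g commutes with an increasing homeomorphism c, left jumps of g are carried along by c.
  (i) Inside the support of a homeomorphism c moving points upwards, a left jump at p would
      produce infinitely many left jumps at p < c p < c (c p) < ..., impossible.
  (ii) The conjugates a^-k b a^k are homeomorphisms with supports (alpha_k, alpha_(k+1)),
      consecutive intervals that cover (0,r) up to the endpoints alpha_k.  At an endpoint
      p = alpha_k, commuting with the two bumps on either side forces g p = p and makes the
      left limit of g at p equal to p.
  Hence g has no left jumps, is continuous, lies in G \<inter> F(r, R+, R) = F, which gives both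
  centralizer equalities.
\<close>


subsection \<open>Increasing homeomorphisms of [0,r]\<close>

definition incr_homeo :: "real \<Rightarrow> (real \<Rightarrow> real) \<Rightarrow> bool" where
  "incr_homeo r c \<longleftrightarrow> 0 < r \<and> strict_mono_on {0..r} c \<and> c ` {0..<r} = {0..<r}
                        \<and> (\<forall>t. t \<notin> {0..<r} \<longrightarrow> c t = t)"

lemma incr_homeo_pos: "incr_homeo r c \<Longrightarrow> 0 < r"
  by (simp add: incr_homeo_def)

lemma incr_homeo_outside: "incr_homeo r c \<Longrightarrow> t \<notin> {0..<r} \<Longrightarrow> c t = t"
  by (simp add: incr_homeo_def)

lemma incr_homeo_maps: "incr_homeo r c \<Longrightarrow> x \<in> {0..<r} \<Longrightarrow> c x \<in> {0..<r}"
  unfolding incr_homeo_def by blast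

lemma incr_homeo_maps_closed: "incr_homeo r c \<Longrightarrow> x \<in> {0..r} \<Longrightarrow> c x \<in> {0..r}"
  using incr_homeo_maps[of r c x] incr_homeo_outside[of r c r] by (cases "x = r") auto

lemma incr_homeo_less:
  "incr_homeo r c \<Longrightarrow> x \<in> {0..r} \<Longrightarrow> y \<in> {0..r} \<Longrightarrow> c x < c y \<longleftrightarrow> x < y"
  unfolding incr_homeo_def strict_mono_on_def by (metis linorder_neq_iff order_less_asym)

lemma incr_homeo_le:
  "incr_homeo r c \<Longrightarrow> x \<in> {0..r} \<Longrightarrow> y \<in> {0..r} \<Longrightarrow> c x \<le> c y \<longleftrightarrow> x \<le> y"
  using incr_homeo_less[of r c y x] by (simp add: not_less[symmetric])

lemma incr_homeo_eq:
  "incr_homeo r c \<Longrightarrow> x \<in> {0..r} \<Longrightarrow> y \<in> {0..r} \<Longrightarrow> c x = c y \<longleftrightarrow> x = y"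
  using incr_homeo_le[of r c x y] incr_homeo_le[of r c y x] by force

lemma incr_homeo_0:
  assumes "incr_homeo r c" shows "c 0 = 0"
proof -
  have r: "0 < r" using incr_homeo_pos[OF assms] .
  obtain w where w: "w \<in> {0..<r}" "c w = 0"
    using assms r unfolding incr_homeo_def by (metis atLeastLessThan_iff image_iff order_refl)
  have "c 0 \<le> c w" using incr_homeo_le[OF assms, of 0 w] w by auto
  moreover have "c 0 \<ge> 0" using incr_homeo_maps[OF assms, of 0] r by auto
  ultimately show ?thesis using w by simp
qed

lemma incr_homeo_interior:
  assumes "incr_homeo r c" "x \<in> {0<..<r}" shows "c x \<in> {0<..<r}"
  using incr_homeo_maps[OF assms(1), of x] incr_homeo_less[OF assms(1), of 0 x] assms(2)
  by (auto simp: incr_homeo_0[OF assms(1)])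

lemma incr_homeo_supp:
  assumes "incr_homeo r c" shows "supp r c \<subseteq> {0<..<r}"
  using incr_homeo_0[OF assms] unfolding supp_def by (auto simp: less_le)

lemma incr_homeo_id: "0 < r \<Longrightarrow> incr_homeo r id"
  by (auto simp: incr_homeo_def strict_mono_on_def)

lemma incr_homeo_comp:
  assumes "incr_homeo r f" "incr_homeo r g" shows "incr_homeo r (f \<circ> g)"
  unfolding incr_homeo_def
proof (intro conjI allI impI)
  show "strict_mono_on {0..r} (f \<circ> g)"
    unfolding strict_mono_on_def
    using incr_homeo_maps_closed[OF assms(2)] incr_homeo_less[OF assms(1)] incr_homeo_less[OF assms(2)]
    by simp
  show "0 < r" using incr_homeo_pos[OF assms(1)] .
  show "(f \<circ> g) ` {0..<r} = {0..<r}" using assms unfolding incr_homeo_def by (metis image_comp)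
  show "(f \<circ> g) t = t" if "t \<notin> {0..<r}" for t
    using that assms by (simp add: incr_homeo_outside)
qed

lemma incr_homeo_funpow: "incr_homeo r f \<Longrightarrow> incr_homeo r (f ^^ n)"
  by (induction n) (simp_all add: incr_homeo_id incr_homeo_comp incr_homeo_pos)

lemma comp_id_apply: "f \<circ> g = id \<Longrightarrow> f (g z) = z"
  by (metis comp_apply id_apply)

lemma incr_homeo_inverse:
  assumes f: "incr_homeo r f" and fg: "f \<circ> g = id" and gf: "g \<circ> f = id"
  shows "incr_homeo r g"
proof -
  have fg': "f (g x) = x" and gf': "g (f x) = x" for x
    using comp_id_apply[OF fg] comp_id_apply[OF gf] by auto
  have "g ` {0..<r} = g ` f ` {0..<r}" using f by (simp add: incr_homeo_def)
  also have "\<dots> = {0..<r}" by (simp add: image_comp gf)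
  finally have im: "g ` {0..<r} = {0..<r}" .
  have g_closed: "g y \<in> {0..r}" if "y \<in> {0..r}" for y
  proof (cases "y = r")
    case True
    then show ?thesis using gf'[of r] incr_homeo_outside[OF f, of r] that by simp
  next
    case False
    then have "y \<in> {0..<r}" using that by auto
    then have "g y \<in> {0..<r}" using im by blast
    then show ?thesis by simp
  qed
  show ?thesis unfolding incr_homeo_def
  proof (intro conjI allI impI)
    show "0 < r" using incr_homeo_pos[OF f] .
    show "strict_mono_on {0..r} g" unfolding strict_mono_on_def
      using incr_homeo_less[OF f] g_closed fg' by metis
    show "g ` {0..<r} = {0..<r}" by (rule im)
    show "g t = t" if "t \<notin> {0..<r}" for t using incr_homeo_outside[OF f that] gf' by metis
  qed
qed

lemma incr_homeo_has_inverse: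
  assumes "incr_homeo r f" obtains g where "f \<circ> g = id" "g \<circ> f = id"
proof -
  have inj: "inj_on f {0..<r}"
    using assms unfolding incr_homeo_def
    by (meson atLeastLessThan_subseteq_atLeastAtMost_iff order_refl strict_mono_on_imp_inj_on inj_on_subset)
  have im: "f ` {0..<r} = {0..<r}" using assms by (simp add: incr_homeo_def)
  define g where "g z = (if z \<in> {0..<r} then the_inv_into {0..<r} f z else z)" for z
  have "f (g z) = z" for z
    using f_the_inv_into_f[OF inj] im incr_homeo_outside[OF assms] unfolding g_def by auto
  moreover have "g (f z) = z" for z
  proof (cases "z \<in> {0..<r}")
    case True
    then show ?thesis
      using the_inv_into_f_f[OF inj True] incr_homeo_maps[OF assms True] unfolding g_def by simp
  next
    case False
    then show ?thesis using incr_homeo_outside[OF assms False] by (auto simp: g_def)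
  qed
  ultimately show ?thesis by (intro that) (auto simp: fun_eq_iff)
qed

lemma incr_homeo_left_limit:
  assumes c: "incr_homeo r c" and q: "0 < q" "q \<le> r"
  shows "filterlim c (at_left (c q)) (at_left q)"
  unfolding filterlim_at
proof
  have ev: "eventually (\<lambda>x. x \<in> {0<..<q}) (at_left q)" using eventually_at_left_real q by blast
  have below: "c x < c q" if "x \<in> {0<..<q}" for x
    using incr_homeo_less[OF c, of x q] that q by auto
  show "\<forall>\<^sub>F x in at_left q. c x \<in> {..<c q} \<and> c x \<noteq> c q"
    using ev by eventually_elim (use below in fastforce)
  show "(c \<longlongrightarrow> c q) (at_left q)"
  proof (rule order_tendstoI)
    fix z assume z: "z < c q"
    show "\<forall>\<^sub>F x in at_left q. z < c x"
    proof (cases "z < 0")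
      case True
      have pos: "0 < c x" if "x \<in> {0<..<q}" for x
        using incr_homeo_less[OF c, of 0 x] incr_homeo_0[OF c] that q by auto
      show ?thesis using ev by eventually_elim (use pos True in fastforce)
    next
      case False
      have "z \<in> {0..<r}" using False z incr_homeo_maps_closed[OF c, of q] q by auto
      then have "z \<in> c ` {0..<r}" using c by (simp add: incr_homeo_def)
      then obtain w where w: "w \<in> {0..<r}" "c w = z" by blast
      have "w < q" using incr_homeo_less[OF c, of w q] w z q by auto
      then have "eventually (\<lambda>x. x \<in> {w<..<q}) (at_left q)" using eventually_at_left_real by blast
      then show ?thesis by eventually_elim (use incr_homeo_less[OF c] q w in auto)
    qed
  qed (use ev below in \<open>fastforce elim: eventually_mono\<close>)
qed


subsection \<open>Local structure of elements of V\<close>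

text \<open>If the head of a nonempty list satisfies P and its last element does not, some
  consecutive pair switches from P to not P; this locates a point in a subdivision.\<close>
lemma list_switch_index:
  assumes "xs \<noteq> []" "P (hd xs)" "\<not> P (last xs)"
  shows "\<exists>i. Suc i < length xs \<and> P (xs ! i) \<and> \<not> P (xs ! Suc i)"
  using assms
proof (induction xs)
  case Nil
  then show ?case by simp
next
  case (Cons x xs)
  consider "xs = []" | "xs \<noteq> []" "\<not> P (hd xs)" | "xs \<noteq> []" "P (hd xs)" by blast
  then show ?case
  proof cases
    case 1
    then show ?thesis using Cons.prems by simp
  next
    case 2
    then show ?thesis using Cons.prems by (intro exI[of _ 0]) (simp add: hd_conv_nth)
  next
    case 3
    then obtain i where "Suc i < length xs" "P (xs ! i)" "\<not> P (xs ! Suc i)"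
      using Cons.IH Cons.prems(3) by auto
    then show ?thesis by (intro exI[of _ "Suc i"]) auto
  qed
qed

lemma V_pieces:
  assumes "x \<in> V_set r {0<..} UNIV"
  obtains ts where "sorted_wrt (<) ts" "ts \<noteq> []" "hd ts = 0" "last ts = r"
    "\<And>i. Suc i < length ts \<Longrightarrow> \<exists>s>0. \<exists>c. \<forall>t\<in>{ts ! i ..< ts ! Suc i}. x t = s * t + c"
proof -
  obtain ts where "sorted_wrt (<) ts" "ts \<noteq> []" "hd ts = 0" "last ts = r"
    "\<forall>i. Suc i < length ts \<longrightarrow>
       (\<exists>s\<in>{0<..}. \<exists>c. \<forall>t\<in>{ts ! i ..< ts ! Suc i}. x t = s * t + c)"
    using assms unfolding V_set_def PL_map_def by blast
  then show ?thesis by (intro that[of ts]) (simp_all, fastforce)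
qed

lemma V_affine_right:
  assumes x: "x \<in> V_set r {0<..} UNIV" and p: "0 \<le> p" "p < r"
  obtains e s c where "e > 0" "s > 0" "\<forall>y\<in>{p..<p+e}. x y = s * y + c"
proof -
  obtain ts where ts: "sorted_wrt (<) ts" "ts \<noteq> []" "hd ts = 0" "last ts = r"
    "\<And>i. Suc i < length ts \<Longrightarrow> \<exists>s>0. \<exists>c. \<forall>t\<in>{ts ! i ..< ts ! Suc i}. x t = s * t + c"
    using V_pieces[OF x] by blast
  obtain i where i: "Suc i < length ts" "ts ! i \<le> p" "\<not> ts ! Suc i \<le> p"
    using list_switch_index[of ts "\<lambda>t. t \<le> p"] ts p by auto
  obtain s c where "s > 0" "\<forall>t\<in>{ts ! i ..< ts ! Suc i}. x t = s * t + c" using ts(5)[OF i(1)] by blast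
  then show ?thesis using i by (intro that[of "ts ! Suc i - p" s c]) auto
qed

lemma V_affine_left:
  assumes x: "x \<in> V_set r {0<..} UNIV" and p: "0 < p" "p \<le> r"
  obtains e s c where "e > 0" "s > 0" "\<forall>y\<in>{p-e<..<p}. x y = s * y + c"
proof -
  obtain ts where ts: "sorted_wrt (<) ts" "ts \<noteq> []" "hd ts = 0" "last ts = r"
    "\<And>i. Suc i < length ts \<Longrightarrow> \<exists>s>0. \<exists>c. \<forall>t\<in>{ts ! i ..< ts ! Suc i}. x t = s * t + c"
    using V_pieces[OF x] by blast
  obtain i where i: "Suc i < length ts" "ts ! i < p" "\<not> ts ! Suc i < p"
    using list_switch_index[of ts "\<lambda>t. t < p"] ts p by auto
  obtain s c where "s > 0" "\<forall>t\<in>{ts ! i ..< ts ! Suc i}. x t = s * t + c" using ts(5)[OF i(1)] by blast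
  then show ?thesis using i by (intro that[of "p - ts ! i" s c]) auto
qed

lemma tendsto_eventually_affine:
  fixes x :: "real \<Rightarrow> real"
  assumes "eventually (\<lambda>y. x y = s * y + c) (at p within S)"
  shows "(x \<longlongrightarrow> s * p + c) (at p within S)"
proof -
  have "((\<lambda>y. s * y + c) \<longlongrightarrow> s * p + c) (at p within S)" by (intro tendsto_intros)
  then show ?thesis by (rule Lim_transform_eventually) (use assms in \<open>auto elim: eventually_mono\<close>)
qed

definition left_jump :: "(real \<Rightarrow> real) \<Rightarrow> real \<Rightarrow> bool" where
  "left_jump x p \<longleftrightarrow> \<not> (x \<longlongrightarrow> x p) (at_left p)"

lemma V_left_limit:
  assumes x: "x \<in> V_set r {0<..} UNIV" and p: "0 < p" "p \<le> r"
  obtains L where "filterlim x (at_left L) (at_left p)"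
proof -
  obtain e s c where esc: "e > 0" "s > 0" "\<forall>y\<in>{p-e<..<p}. x y = s * y + c"
    using V_affine_left[OF x p] by blast
  have ev: "eventually (\<lambda>y. y \<in> {p-e<..<p}) (at_left p)" using eventually_at_left_real esc by simp
  have "(x \<longlongrightarrow> s * p + c) (at_left p)"
    by (rule tendsto_eventually_affine) (use ev esc in \<open>auto elim: eventually_mono\<close>)
  moreover have "eventually (\<lambda>y. x y < s * p + c) (at_left p)"
    using ev by eventually_elim (use esc in auto)
  ultimately show ?thesis
    by (intro that[of "s * p + c"]) (auto simp: filterlim_at elim: eventually_mono)
qed

text \<open>Left jumps can only occur at the breakpoints of the subdivision.\<close>
lemma V_left_jumps_finite:
  assumes x: "x \<in> V_set r {0<..} UNIV"
  shows "finite {p \<in> {0<..<r}. left_jump x p}"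
proof -
  obtain ts where ts: "sorted_wrt (<) ts" "ts \<noteq> []" "hd ts = 0" "last ts = r"
    "\<And>i. Suc i < length ts \<Longrightarrow> \<exists>s>0. \<exists>c. \<forall>t\<in>{ts ! i ..< ts ! Suc i}. x t = s * t + c"
    using V_pieces[OF x] by blast
  have "{p \<in> {0<..<r}. left_jump x p} \<subseteq> set ts"
  proof (rule subsetI, rule ccontr)
    fix p assume p: "p \<in> {p \<in> {0<..<r}. left_jump x p}" and not_break: "p \<notin> set ts"
    obtain i where i: "Suc i < length ts" "ts ! i \<le> p" "\<not> ts ! Suc i \<le> p"
      using list_switch_index[of ts "\<lambda>t. t \<le> p"] ts p by auto
    have "ts ! i \<noteq> p" using not_break i(1) by auto
    then have ev: "eventually (\<lambda>y. y \<in> {ts ! i <..< p}) (at_left p)"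
      using eventually_at_left_real i(2) by simp
    obtain s c where sc: "\<forall>t\<in>{ts ! i ..< ts ! Suc i}. x t = s * t + c" using ts(5)[OF i(1)] by blast
    have "(x \<longlongrightarrow> s * p + c) (at_left p)"
      by (rule tendsto_eventually_affine) (use ev sc i in \<open>auto elim!: eventually_mono\<close>)
    moreover have "x p = s * p + c" using sc i by auto
    ultimately show False using p unfolding left_jump_def by simp
  qed
  then show ?thesis using finite_subset by blast
qed

text \<open>Elements of V are right-continuous, so without left jumps they are continuous.\<close>
lemma V_continuous_if_no_left_jumps:
  assumes x: "x \<in> V_set r {0<..} UNIV" and no_jump: "\<forall>p\<in>{0<..<r}. \<not> left_jump x p"
  shows "continuous_on {0..<r} x"
  unfolding continuous_on_eq_continuous_within
proof
  fix p assume p: "p \<in> {0..<r}"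
  then have "0 \<le> p" "p < r" by auto
  then obtain e s c where esc: "e > 0" "s > 0" "\<forall>y\<in>{p..<p+e}. x y = s * y + c"
    using V_affine_right[OF x] by blast
  have "eventually (\<lambda>y. y \<in> {p<..<p+e}) (at_right p)" using eventually_at_right_real esc by simp
  then have "(x \<longlongrightarrow> s * p + c) (at_right p)"
    by (rule tendsto_eventually_affine[OF eventually_mono]) (use esc in auto)
  then have right: "(x \<longlongrightarrow> x p) (at_right p)" using esc by simp
  show "continuous (at p within {0..<r}) x"
    unfolding continuous_within
  proof (cases "p = 0")
    case True
    have "at p within {0..<r} \<le> at_right p"
      unfolding at_within_def by (intro inf_mono order_refl) (auto simp: True)
    then show "(x \<longlongrightarrow> x p) (at p within {0..<r})" using right by (rule tendsto_mono)
  next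
    case False
    then have "(x \<longlongrightarrow> x p) (at_left p)" using no_jump p unfolding left_jump_def by auto
    then have "(x \<longlongrightarrow> x p) (at p)" using right by (rule filterlim_split_at)
    then show "(x \<longlongrightarrow> x p) (at p within {0..<r})" by (rule tendsto_mono[OF at_le[OF subset_UNIV]])
  qed
qed


subsection \<open>Commuting with increasing homeomorphisms\<close>

lemma V_maps: "g \<in> V_set r L A \<Longrightarrow> x \<in> {0..<r} \<Longrightarrow> g x \<in> {0..<r}"
  unfolding V_set_def using bij_betwE by blast

lemma V_inj_on: "g \<in> V_set r L A \<Longrightarrow> inj_on g {0..<r}"
  by (simp add: V_set_def bij_betw_def)

lemma incr_homeo_inj_on: "incr_homeo r c \<Longrightarrow> inj_on c {0..<r}"
  using incr_homeo_eq by (fastforce intro: inj_onI)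

lemma commuting_preserves_supp:
  assumes g: "g ` {0..<r} \<subseteq> {0..<r}" "inj_on g {0..<r}"
    and c: "c ` {0..<r} \<subseteq> {0..<r}" and comm: "g \<circ> c = c \<circ> g" and x: "x \<in> supp r c"
  shows "g x \<in> supp r c"
proof -
  have "g (c x) \<noteq> g x" using inj_onD[OF g(2)] x c unfolding supp_def by blast
  moreover have "g x \<in> {0..<r}" using g(1) x unfolding supp_def by blast
  ultimately show ?thesis using comp_eq_dest[OF comm, of x] unfolding supp_def by auto
qed

lemma V_preserves_supp:
  assumes g: "g \<in> V_set r L A" and c: "incr_homeo r c" and comm: "g \<circ> c = c \<circ> g"
    and x: "x \<in> supp r c"
  shows "g x \<in> supp r c"
proof (rule commuting_preserves_supp[OF _ _ _ comm x])
  show "g ` {0..<r} \<subseteq> {0..<r}" using V_maps[OF g] by blast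
  show "inj_on g {0..<r}" using V_inj_on[OF g] .
  show "c ` {0..<r} \<subseteq> {0..<r}" using incr_homeo_maps[OF c] by blast
qed

text \<open>Commuting with c transports a left jump of g at p to one at c p: near p on the left,
  g (c y) = c (g y), and c preserves one-sided limits together with their distinctness.\<close>
lemma left_jump_transport:
  assumes g: "g \<in> V_set r {0<..} UNIV" and c: "incr_homeo r c" and comm: "g \<circ> c = c \<circ> g"
    and p: "p \<in> {0<..<r}" and jump: "left_jump g p"
  shows "left_jump g (c p)"
proof -
  have p': "0 < p" "p \<le> r" using p by auto
  obtain L where L: "filterlim g (at_left L) (at_left p)" using V_left_limit[OF g p'] by blast
  have Lt: "(g \<longlongrightarrow> L) (at_left p)" using L by (simp add: filterlim_at)
  have "L \<noteq> g p" using jump Lt unfolding left_jump_def by auto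
  have ev_p: "eventually (\<lambda>y. y \<in> {0<..<p}) (at_left p)" using eventually_at_left_real[OF p'(1)] .
  have ev_L: "eventually (\<lambda>y. g y \<in> {..<L}) (at_left p)" using L by (auto simp: filterlim_at elim: eventually_mono)
  have ev: "eventually (\<lambda>y. 0 \<le> g y \<and> g y < r \<and> g y < L) (at_left p)"
    using ev_p ev_L
  proof eventually_elim
    case (elim y)
    then have "g y \<in> {0..<r}" using V_maps[OF g] p by simp
    then show ?case using elim by simp
  qed
  have L_le: "L \<le> r" by (rule tendsto_upperbound[OF Lt]) (use ev in \<open>auto elim: eventually_mono\<close>)
  have L_pos: "0 < L" using eventually_happens[OF ev] by auto
  have cp: "c p \<in> {0<..<r}" using incr_homeo_interior[OF c p] .
  then have "0 < c p" "c p \<le> r" by auto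
  then obtain L' where L': "filterlim g (at_left L') (at_left (c p))" using V_left_limit[OF g] by blast
  have "filterlim (\<lambda>y. g (c y)) (at_left L') (at_left p)"
    using filterlim_compose[OF L' incr_homeo_left_limit[OF c p']] .
  then have lim1: "((\<lambda>y. c (g y)) \<longlongrightarrow> L') (at_left p)"
    by (simp add: filterlim_at comp_eq_dest[OF comm])
  have "filterlim (\<lambda>y. c (g y)) (at_left (c L)) (at_left p)"
    using filterlim_compose[OF incr_homeo_left_limit[OF c L_pos L_le] L] .
  then have lim2: "((\<lambda>y. c (g y)) \<longlongrightarrow> c L) (at_left p)" by (simp add: filterlim_at)
  have "g p \<in> {0..<r}" using V_maps[OF g] p by simp
  then have "c L \<noteq> c (g p)"
    using incr_homeo_eq[OF c, of L "g p"] \<open>L \<noteq> g p\<close> L_pos L_le by auto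
  moreover have "L' = c L" using tendsto_unique[OF _ lim1 lim2] by simp
  ultimately have "L' \<noteq> g (c p)" by (simp add: comp_eq_dest[OF comm])
  moreover have "(g \<longlongrightarrow> L') (at_left (c p))" using L' by (simp add: filterlim_at)
  ultimately show ?thesis
    unfolding left_jump_def by (metis tendsto_unique trivial_limit_at_left_real)
qed

text \<open>Inside the support of a homeomorphism c moving points upwards, a left jump at p would
  give left jumps at all the distinct points p < c p < c (c p) < ..., contradicting finiteness.\<close>
lemma no_left_jump_in_rising_support:
  assumes g: "g \<in> V_set r {0<..} UNIV" and c: "incr_homeo r c" and comm: "g \<circ> c = c \<circ> g"
    and rising: "\<forall>x\<in>supp r c. x < c x" and p: "p \<in> supp r c"
  shows "\<not> left_jump g p"
proof
  assume jump: "left_jump g p"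
  define q where "q n = (c ^^ n) p" for n
  have orbit: "q n \<in> supp r c \<and> left_jump g (q n)" for n
  proof (induction n)
    case 0
    then show ?case using p jump by (simp add: q_def)
  next
    case (Suc n)
    have "c (q n) \<in> supp r c"
      by (rule commuting_preserves_supp[of c]) (use Suc incr_homeo_inj_on[OF c] incr_homeo_maps[OF c] in auto)
    moreover have "left_jump g (c (q n))"
      using left_jump_transport[OF g c comm] Suc incr_homeo_supp[OF c] by blast
    ultimately show ?case by (simp add: q_def)
  qed
  have "strict_mono q" unfolding strict_mono_Suc_iff using orbit rising by (simp add: q_def)
  then have "infinite (range q)" by (simp add: range_inj_infinite strict_mono_imp_inj_on)
  moreover have "range q \<subseteq> {p \<in> {0<..<r}. left_jump g p}"
    using orbit incr_homeo_supp[OF c] by (auto simp: subset_iff)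
  ultimately show False using V_left_jumps_finite[OF g] finite_subset by blast
qed

text \<open>If c has support (p,v), an element g of V commuting with c fixes p: g p is fixed by c,
  and by right-continuity g p is a limit of points of the support g (p,p+e).\<close>
lemma commuting_fixes_left_end:
  assumes g: "g \<in> V_set r {0<..} UNIV" and c: "incr_homeo r c" and comm: "g \<circ> c = c \<circ> g"
    and S: "supp r c = {p<..<v}" and pv: "0 \<le> p" "p < v" "v \<le> r"
  shows "g p = p"
proof -
  have p_lt: "p < r" using pv by simp
  have "p \<notin> supp r c" using S by simp
  then have "c p = p" using pv p_lt by (simp add: supp_def)
  then have "g p \<notin> supp r c" by (simp add: supp_def comp_eq_dest[OF comm, of p, symmetric])
  then have not_inside: "g p \<notin> {p<..<v}" using S by simp
  obtain e s d where esd: "e > 0" "s > 0" "\<forall>y\<in>{p..<p+e}. g y = s * y + d"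
    using V_affine_right[OF g pv(1) p_lt] by blast
  have ev: "eventually (\<lambda>y. y \<in> {p<..<min (p+e) v}) (at_right p)"
    by (rule eventually_at_right_real) (use esd pv in auto)
  then have "(g \<longlongrightarrow> s * p + d) (at_right p)"
    by (rule tendsto_eventually_affine[OF eventually_mono]) (use esd in auto)
  then have right: "(g \<longlongrightarrow> g p) (at_right p)" using esd by simp
  have ev_g: "eventually (\<lambda>y. g y \<in> {p<..<v} \<and> g p < g y) (at_right p)"
    using ev
  proof eventually_elim
    case (elim y)
    then have "g y \<in> supp r c" using V_preserves_supp[OF g c comm] S by auto
    then show ?case using S esd elim by auto
  qed
  have "p \<le> g p" by (rule tendsto_lowerbound[OF right]) (use ev_g in \<open>auto elim: eventually_mono\<close>)
  moreover have "g p < v" using eventually_happens[OF ev_g] by auto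
  ultimately show ?thesis using not_inside by auto
qed

text \<open>If c has support (u,p), the left limit L of g at p equals p: otherwise L would lie in
  the support, while commuting with c forces c L = L.\<close>
lemma commuting_left_limit_at_right_end:
  assumes g: "g \<in> V_set r {0<..} UNIV" and c: "incr_homeo r c" and comm: "g \<circ> c = c \<circ> g"
    and S: "supp r c = {u<..<p}" and up: "0 \<le> u" "u < p" "p < r"
    and L: "filterlim g (at_left L) (at_left p)"
  shows "L = p"
proof (rule ccontr)
  assume "L \<noteq> p"
  have Lt: "(g \<longlongrightarrow> L) (at_left p)" using L by (simp add: filterlim_at)
  have ev_p: "eventually (\<lambda>y. y \<in> {u<..<p}) (at_left p)" using eventually_at_left_real[OF up(2)] .
  have ev_L: "eventually (\<lambda>y. g y \<in> {..<L}) (at_left p)" using L by (auto simp: filterlim_at elim: eventually_mono)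
  have ev: "eventually (\<lambda>y. g y \<in> {u<..<p} \<and> g y < L) (at_left p)"
    using ev_p ev_L
  proof eventually_elim
    case (elim y)
    then have "g y \<in> supp r c" using V_preserves_supp[OF g c comm] S by auto
    then show ?case using elim S by simp
  qed
  have "L \<le> p" by (rule tendsto_upperbound[OF Lt]) (use ev in \<open>auto elim: eventually_mono\<close>)
  moreover have "u < L" using eventually_happens[OF ev] by auto
  ultimately have L_supp: "L \<in> supp r c" and L_range: "0 < L" "L \<le> r"
    using S up \<open>L \<noteq> p\<close> by auto
  have "p \<notin> supp r c" using S by simp
  then have "c p = p" using up by (simp add: supp_def)
  then have "filterlim c (at_left p) (at_left p)" using incr_homeo_left_limit[OF c, of p] up by simp
  then have "filterlim (\<lambda>y. g (c y)) (at_left L) (at_left p)" by (rule filterlim_compose[OF L])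
  then have lim1: "((\<lambda>y. c (g y)) \<longlongrightarrow> L) (at_left p)"
    by (simp add: filterlim_at comp_eq_dest[OF comm])
  have "filterlim (\<lambda>y. c (g y)) (at_left (c L)) (at_left p)"
    using filterlim_compose[OF incr_homeo_left_limit[OF c L_range] L] .
  then have lim2: "((\<lambda>y. c (g y)) \<longlongrightarrow> c L) (at_left p)" by (simp add: filterlim_at)
  have "c L = L" using tendsto_unique[OF _ lim2 lim1] by simp
  then show False using L_supp unfolding supp_def by simp
qed

lemma no_left_jump_between_supports:
  assumes g: "g \<in> V_set r {0<..} UNIV"
    and c1: "incr_homeo r c1" "g \<circ> c1 = c1 \<circ> g" "supp r c1 = {u<..<p}"
    and c2: "incr_homeo r c2" "g \<circ> c2 = c2 \<circ> g" "supp r c2 = {p<..<v}"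
    and order: "0 \<le> u" "u < p" "p < v" "v \<le> r"
  shows "\<not> left_jump g p"
proof -
  have "0 < p" "p \<le> r" using order by auto
  then obtain L where L: "filterlim g (at_left L) (at_left p)" using V_left_limit[OF g] by blast
  have "L = p" using commuting_left_limit_at_right_end[OF g c1 _ _ _ L] order by simp
  moreover have "g p = p" using commuting_fixes_left_end[OF g c2] order by simp
  ultimately show ?thesis using L unfolding left_jump_def filterlim_at by simp
qed


subsection \<open>Orbits of a map without fixed points in (0,r)\<close>

lemma orbit_limit_is_fixed:
  fixes a :: "real \<Rightarrow> real" and X :: "nat \<Rightarrow> real"
  assumes cont: "continuous_on {0..<r} a" and L: "L \<in> {0..<r}"
    and X: "X \<longlonglongrightarrow> L" and X_in: "\<And>n. X n \<in> {0..<r}" and aX: "(\<lambda>n. a (X n)) \<longlonglongrightarrow> L"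
  shows "a L = L"
proof -
  have "(\<lambda>n. a (X n)) \<longlonglongrightarrow> a L"
    by (rule continuous_on_tendsto_compose[OF cont X L]) (use X_in in \<open>auto intro: always_eventually\<close>)
  then show ?thesis using aX LIMSEQ_unique by blast
qed

text \<open>A forward orbit of a continuous map moving every point of (0,r) upwards leaves every
  interval (0,p] with p < r: otherwise it would converge to a fixed point.\<close>
lemma orbit_unbounded_above:
  fixes a :: "real \<Rightarrow> real" and \<alpha> :: "int \<Rightarrow> real"
  assumes cont: "continuous_on {0..<r} a" and rising: "\<forall>x\<in>{0<..<r}. x < a x"
    and \<alpha>_in: "\<And>j. \<alpha> j \<in> {0<..<r}" and \<alpha>_step: "\<And>j. \<alpha> (j+1) = a (\<alpha> j)"
    and p: "p < r"
  shows "\<exists>n::nat. p < \<alpha> (int n)"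
proof (rule ccontr)
  assume "\<not> ?thesis"
  then have le: "\<alpha> (int n) \<le> p" for n by (simp add: not_less)
  define X where "X n = \<alpha> (int n)" for n
  have X_in: "X n \<in> {0<..<r}" for n unfolding X_def by (rule \<alpha>_in)
  have step: "X (Suc n) = a (X n)" for n using \<alpha>_step[of "int n"] by (simp add: X_def add.commute)
  have "X n \<le> X (Suc n)" for n using rising X_in[of n] step[of n] by (auto simp: less_imp_le)
  then have "incseq X" by (rule incseq_SucI)
  moreover have bdd: "bdd_above (range X)" using le by (auto simp: X_def intro!: bdd_aboveI)
  ultimately have lim: "X \<longlonglongrightarrow> (SUP n. X n)" by (intro LIMSEQ_incseq_SUP)
  have "(SUP n. X n) \<le> p" using le by (auto simp: X_def intro!: cSUP_least)
  moreover have "X 0 \<le> (SUP n. X n)" by (rule cSUP_upper[OF _ bdd]) simp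
  ultimately have sup_in: "(SUP n. X n) \<in> {0<..<r}" using X_in[of 0] p by auto
  have "(\<lambda>n. a (X n)) \<longlonglongrightarrow> (SUP n. X n)" using LIMSEQ_Suc[OF lim] by (simp add: step)
  moreover have "X n \<in> {0..<r}" for n using X_in[of n] by simp
  ultimately have "a (SUP n. X n) = (SUP n. X n)"
    using orbit_limit_is_fixed[OF cont _ lim] sup_in by auto
  then show False using rising sup_in by force
qed

lemma orbit_unbounded_below:
  fixes a :: "real \<Rightarrow> real" and \<alpha> :: "int \<Rightarrow> real"
  assumes cont: "continuous_on {0..<r} a" and rising: "\<forall>x\<in>{0<..<r}. x < a x"
    and \<alpha>_in: "\<And>j. \<alpha> j \<in> {0<..<r}" and \<alpha>_step: "\<And>j. \<alpha> (j+1) = a (\<alpha> j)"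
    and p: "0 < p"
  shows "\<exists>m::nat. \<alpha> (- int m) \<le> p"
proof (rule ccontr)
  assume "\<not> ?thesis"
  then have ge: "p < \<alpha> (- int m)" for m by (simp add: not_le)
  define Y where "Y m = \<alpha> (- int m)" for m
  have Y_in: "Y m \<in> {0<..<r}" for m unfolding Y_def by (rule \<alpha>_in)
  have step: "Y m = a (Y (Suc m))" for m using \<alpha>_step[of "- int (Suc m)"] by (simp add: Y_def)
  have "Y (Suc m) \<le> Y m" for m using rising Y_in[of "Suc m"] step[of m] by (auto simp: less_imp_le)
  then have "decseq Y" by (rule decseq_SucI)
  moreover have bdd: "bdd_below (range Y)" using ge by (auto simp: Y_def intro!: bdd_belowI less_imp_le)
  ultimately have lim: "Y \<longlonglongrightarrow> (INF m. Y m)" by (intro LIMSEQ_decseq_INF)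
  have "p \<le> Y m" for m using ge[of m] by (simp add: Y_def)
  then have "p \<le> (INF m. Y m)" by (intro cINF_greatest) auto
  moreover have "(INF m. Y m) \<le> Y 0" by (rule cINF_lower[OF bdd]) simp
  ultimately have inf_in: "(INF m. Y m) \<in> {0<..<r}" using Y_in[of 0] p by auto
  have "(\<lambda>m. a (Y (Suc m))) \<longlonglongrightarrow> (INF m. Y m)" using lim by (simp add: step[symmetric])
  moreover have "Y (Suc m) \<in> {0..<r}" for m using Y_in[of "Suc m"] by simp
  ultimately have "a (INF m. Y m) = (INF m. Y m)"
    using orbit_limit_is_fixed[OF cont _ LIMSEQ_Suc[OF lim]] inf_in by auto
  then show False using rising inf_in by force
qed

lemma orbit_covers:
  fixes a :: "real \<Rightarrow> real" and \<alpha> :: "int \<Rightarrow> real"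
  assumes cont: "continuous_on {0..<r} a" and rising: "\<forall>x\<in>{0<..<r}. x < a x"
    and \<alpha>_in: "\<And>j. \<alpha> j \<in> {0<..<r}" and \<alpha>_step: "\<And>j. \<alpha> (j+1) = a (\<alpha> j)"
    and p: "p \<in> {0<..<r}"
  shows "\<exists>k. \<alpha> k \<le> p \<and> p < \<alpha> (k+1)"
proof -
  obtain n :: nat where n: "p < \<alpha> (int n)"
    using orbit_unbounded_above[where \<alpha> = \<alpha>, OF cont rising \<alpha>_in \<alpha>_step] p by auto
  obtain m :: nat where m: "\<alpha> (- int m) \<le> p"
    using orbit_unbounded_below[where \<alpha> = \<alpha>, OF cont rising \<alpha>_in \<alpha>_step] p by auto
  define xs where "xs = map (\<lambda>i. \<alpha> (- int m + int i)) [0..<m+n+1]"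
  have xs_nth: "xs ! i = \<alpha> (- int m + int i)" if "i < length xs" for i
    using that by (simp add: xs_def del: upt_Suc)
  have len: "length xs = m + n + 1" by (simp add: xs_def del: upt_Suc)
  then have ne: "xs \<noteq> []" by auto
  have "hd xs = \<alpha> (- int m)" using ne len by (simp add: hd_conv_nth xs_nth)
  moreover have "last xs = \<alpha> (int n)" using ne len by (simp add: last_conv_nth xs_nth)
  ultimately obtain i where i: "Suc i < length xs" "xs ! i \<le> p" "\<not> xs ! Suc i \<le> p"
    using list_switch_index[of xs "\<lambda>t. t \<le> p"] ne m n by auto
  then show ?thesis
    by (intro exI[of _ "- int m + int i"]) (auto simp: xs_nth algebra_simps)
qed


text \<open>A continuous element of V fixing 0 is strictly increasing (a continuous injection of
  an interval is monotone), hence an increasing homeomorphism.\<close>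
lemma F_incr_homeo:
  assumes x: "x \<in> F_set r L A" and x0: "x 0 = 0" and r: "0 < r"
  shows "incr_homeo r x"
proof -
  have xV: "x \<in> V_set r L A" and cont: "continuous_on {0..<r} x" using x by (auto simp: F_set_def)
  have out: "x t = t" if "t \<notin> {0..<r}" for t using xV that by (simp add: V_set_def)
  have inc: "x u < x v" if uv: "0 \<le> u" "u < v" "v \<le> r" for u v
  proof (cases "v = r")
    case True
    then show ?thesis using out[of r] V_maps[OF xV, of u] uv by auto
  next
    case False
    then have v: "v \<in> {0..<r}" using uv by auto
    show ?thesis
    proof (cases "u = 0")
      case True
      have "x v \<noteq> x 0" using inj_onD[OF V_inj_on[OF xV], of v 0] v uv r by auto
      then show ?thesis using V_maps[OF xV v] x0 True by auto
    next
      case False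
      then have "(x 0 < x u \<and> x u < x v) \<or> (x v < x u \<and> x u < x 0)"
        using uv v
        by (intro continuous_inj_imp_mono)
           (auto intro: continuous_on_subset[OF cont] inj_on_subset[OF V_inj_on[OF xV]])
      then show ?thesis using V_maps[OF xV, of u] uv v x0 by auto
    qed
  qed
  show ?thesis unfolding incr_homeo_def
    using r inc out xV by (auto simp: strict_mono_on_def V_set_def bij_betw_def)
qed

lemma F_up_rising_homeo:
  assumes x: "x \<in> F_up r \<Lambda> A" and x0: "0 \<notin> supp r x" and r: "0 < r"
  shows "incr_homeo r x" "\<forall>y\<in>supp r x. y < x y"
proof -
  have "x 0 = 0" using x0 r by (simp add: supp_def)
  then show "incr_homeo r x" using F_incr_homeo[of x r \<Lambda> A] x r by (simp add: F_up_def)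
  show "\<forall>y\<in>supp r x. y < x y" using x by (force simp: F_up_def supp_def)
qed

lemma Vgrp_carrier: "carrier (Vgrp r L A) = V_set r L A"
  by (simp add: Vgrp_def)

lemma Vgrp_mult: "x \<otimes>\<^bsub>Vgrp r L A\<^esub> y = y \<circ> x"
  by (simp add: Vgrp_def)

lemma Vgrp_nat_pow: "x [^]\<^bsub>Vgrp r L A\<^esub> (n::nat) = x ^^ n"
  by (induction n) (simp_all add: Vgrp_mult Vgrp_def)

lemma Vgrp_inv:
  assumes "y \<in> V_set r L A" "x \<circ> y = id" "y \<circ> x = id"
  shows "inv\<^bsub>Vgrp r L A\<^esub> x = y"
  unfolding m_inv_def
proof (rule the_equality)
  show "y \<in> carrier (Vgrp r L A) \<and> x \<otimes>\<^bsub>Vgrp r L A\<^esub> y = \<one>\<^bsub>Vgrp r L A\<^esub>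
        \<and> y \<otimes>\<^bsub>Vgrp r L A\<^esub> x = \<one>\<^bsub>Vgrp r L A\<^esub>"
    using assms by (simp add: Vgrp_def)
  fix z assume "z \<in> carrier (Vgrp r L A) \<and> x \<otimes>\<^bsub>Vgrp r L A\<^esub> z = \<one>\<^bsub>Vgrp r L A\<^esub>
        \<and> z \<otimes>\<^bsub>Vgrp r L A\<^esub> x = \<one>\<^bsub>Vgrp r L A\<^esub>"
  then have "z \<circ> x = id" by (simp add: Vgrp_def)
  then show "z = y" using assms(2) by (metis comp_assoc comp_id id_comp)
qed

lemma sorted_list_bounds:
  fixes ts :: "real list"
  assumes "sorted_wrt (<) ts" "ts \<noteq> []" "t \<in> set ts"
  shows "hd ts \<le> t" "t \<le> last ts"
proof -
  have sorted: "sorted ts" using sorted_wrt_mono_rel[OF _ assms(1)] by auto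
  obtain k where k: "k < length ts" "ts ! k = t" using assms(3) by (auto simp: in_set_conv_nth)
  show "hd ts \<le> t" using sorted_nth_mono[OF sorted, of 0 k] k assms(2) by (simp add: hd_conv_nth)
  show "t \<le> last ts"
    using sorted_nth_mono[OF sorted, of k "length ts - 1"] k assms(2) by (simp add: last_conv_nth)
qed

text \<open>The inverse of an element of V that is an increasing homeomorphism is again in V: it
  is affine on the images of the pieces, with the reciprocal slopes.\<close>
lemma V_inverse:
  assumes xV: "x \<in> V_set r {0<..} UNIV" and xH: "incr_homeo r x"
    and xy: "x \<circ> y = id" "y \<circ> x = id"
  shows "y \<in> V_set r {0<..} UNIV"
proof -
  have yH: "incr_homeo r y" using incr_homeo_inverse[OF xH xy] .
  have xy': "x (y u) = u" for u using comp_id_apply[OF xy(1)] .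
  obtain ts where ts: "sorted_wrt (<) ts" "ts \<noteq> []" "hd ts = 0" "last ts = r"
    "\<And>i. Suc i < length ts \<Longrightarrow> \<exists>s>0. \<exists>c. \<forall>t\<in>{ts ! i ..< ts ! Suc i}. x t = s * t + c"
    using V_pieces[OF xV] by blast
  have ts_range: "t \<in> {0..r}" if "t \<in> set ts" for t
    using sorted_list_bounds[OF ts(1,2) that] ts(3,4) by auto
  have affine: "\<exists>s\<in>{0<..}. \<exists>c. \<forall>u\<in>{map x ts ! i ..< map x ts ! Suc i}. y u = s * u + c"
    if i: "Suc i < length ts" for i
  proof -
    obtain s c where sc: "s > 0" "\<forall>t\<in>{ts ! i ..< ts ! Suc i}. x t = s * t + c" using ts(5)[OF i] by blast
    have ti: "ts ! i \<in> {0..r}" "ts ! Suc i \<in> {0..r}" using ts_range i by auto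
    have "y u = (1/s) * u + (- c / s)" if u: "u \<in> {map x ts ! i ..< map x ts ! Suc i}" for u
    proof -
      have u': "x (ts ! i) \<le> u" "u < x (ts ! Suc i)" using u i by auto
      then have "u \<in> {0..r}" using incr_homeo_maps_closed[OF xH] ti by fastforce
      then have yu: "y u \<in> {0..r}" using incr_homeo_maps_closed[OF yH] by blast
      have "ts ! i \<le> y u" "y u < ts ! Suc i"
        using incr_homeo_le[OF xH ti(1) yu] incr_homeo_less[OF xH yu ti(2)] u' xy' by auto
      then have "u = s * y u + c" using sc xy'[of u] by auto
      then show ?thesis using sc(1) by (simp add: field_simps)
    qed
    then show ?thesis using sc(1) by (intro bexI[of _ "1/s"] exI[of _ "- c / s"]) auto
  qed
  have "PL_map r {0<..} UNIV y"
    unfolding PL_map_def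
  proof (intro exI[of _ "map x ts"] conjI allI impI)
    show "sorted_wrt (<) (map x ts)" unfolding sorted_wrt_map
      by (rule sorted_wrt_mono_rel[OF _ ts(1)]) (use incr_homeo_less[OF xH] ts_range in blast)
  qed (use ts affine incr_homeo_0[OF xH] incr_homeo_outside[OF xH, of r] in \<open>auto simp: hd_map last_map\<close>)
  moreover have "bij_betw y {0..<r} {0..<r}"
    using yH incr_homeo_inj_on[OF yH] by (simp add: bij_betw_def incr_homeo_def)
  ultimately show ?thesis using incr_homeo_outside[OF yH] by (simp add: V_set_def)
qed

lemma funpow_inverse:
  fixes f g :: "'a \<Rightarrow> 'a"
  assumes "f \<circ> g = id" shows "f ^^ n \<circ> g ^^ n = id"
proof (induction n)
  case (Suc n)
  have f_Suc: "f ^^ Suc n = f ^^ n \<circ> f" by (rule funpow_Suc_right)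
  have g_Suc: "g ^^ Suc n = g \<circ> g ^^ n" by simp
  have "f ^^ Suc n \<circ> g ^^ Suc n = f ^^ n \<circ> (f \<circ> g) \<circ> g ^^ n"
    unfolding f_Suc g_Suc by (simp add: comp_assoc)
  also have "\<dots> = id" using Suc.IH by (simp only: assms comp_id)
  finally show ?case .
qed simp

text \<open>Integer iterates of f, with f' playing the role of the inverse of f.\<close>
definition int_iter :: "('a \<Rightarrow> 'a) \<Rightarrow> ('a \<Rightarrow> 'a) \<Rightarrow> int \<Rightarrow> 'a \<Rightarrow> 'a" where
  "int_iter f f' k = (if k < 0 then f' ^^ nat (- k) else f ^^ nat k)"

lemma int_iter_succ:
  assumes "f \<circ> f' = id" shows "int_iter f f' (k + 1) = f \<circ> int_iter f f' k"
proof (cases "k < 0")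
  case True
  then have "nat (- k) = Suc (nat (- (k + 1)))" by simp
  moreover have "f \<circ> (f' \<circ> h) = h" for h :: "'a \<Rightarrow> 'a" using assms by (simp add: comp_assoc[symmetric])
  ultimately show ?thesis using True by (simp add: int_iter_def)
next
  case False
  then have "nat (k + 1) = Suc (nat k)" by simp
  then show ?thesis using False by (simp add: int_iter_def)
qed

lemma int_iter_inverse:
  assumes "f \<circ> f' = id" "f' \<circ> f = id"
  shows "int_iter f f' k \<circ> int_iter f f' (- k) = id"
  using funpow_inverse[OF assms(1)] funpow_inverse[OF assms(2)] by (simp add: int_iter_def)

lemma int_iter_comm:
  assumes "f \<circ> f' = id" "f' \<circ> f = id"
  shows "f \<circ> int_iter f f' k = int_iter f f' k \<circ> f"
proof -
  have "f \<circ> f' ^^ n = f' ^^ n \<circ> f" for n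
  proof (cases n)
    case (Suc m)
    have "f \<circ> f' ^^ Suc m = f' ^^ m" using assms(1) by (simp add: comp_assoc[symmetric])
    also have "\<dots> = f' ^^ Suc m \<circ> f"
      using assms(2) by (simp only: funpow_Suc_right comp_assoc) simp
    finally show ?thesis using Suc by simp
  qed simp
  then show ?thesis by (simp add: int_iter_def funpow_swap1 fun_eq_iff)
qed

lemma incr_homeo_int_iter:
  "incr_homeo r f \<Longrightarrow> incr_homeo r f' \<Longrightarrow> incr_homeo r (int_iter f f' k)"
  by (simp add: int_iter_def incr_homeo_funpow)

lemma Vgrp_int_pow:
  assumes G: "subgroup G (Vgrp r {0<..} UNIV)" and aG: "a \<in> G" and aH: "incr_homeo r a"
    and aa: "a \<circ> a' = id" "a' \<circ> a = id"
  shows "a [^]\<^bsub>Vgrp r {0<..} UNIV\<^esub> (k::int) = int_iter a a' k"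
proof -
  have "a [^]\<^bsub>Vgrp r {0<..} UNIV\<^esub> n \<in> G" for n :: nat
    by (induction n) (simp_all add: subgroup.one_closed[OF G] subgroup.m_closed[OF G] aG)
  then have "a ^^ n \<in> G" for n by (simp add: Vgrp_nat_pow)
  then have "a ^^ n \<in> V_set r {0<..} UNIV" for n
    using subgroup.subset[OF G] by (auto simp: Vgrp_carrier)
  then have "inv\<^bsub>Vgrp r {0<..} UNIV\<^esub> (a ^^ n) = a' ^^ n" for n
    using V_inverse incr_homeo_funpow[OF aH] funpow_inverse[OF aa(1)] funpow_inverse[OF aa(2)]
    by (metis Vgrp_inv)
  then show ?thesis by (simp add: int_pow_def2 int_iter_def Vgrp_nat_pow)
qed

lemma Vgrp_int_powers:
  assumes G: "subgroup G (Vgrp r {0<..} UNIV)" and aG: "a \<in> G" and aH: "incr_homeo r a"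
  obtains E where "\<And>k. a [^]\<^bsub>Vgrp r {0<..} UNIV\<^esub> (k::int) = E k" "\<And>k. incr_homeo r (E k)"
    "\<And>k. E k \<circ> E (- k) = id" "\<And>k. E (k + 1) = a \<circ> E k" "\<And>k. a \<circ> E k = E k \<circ> a"
proof -
  obtain a' where aa: "a \<circ> a' = id" "a' \<circ> a = id" using incr_homeo_has_inverse[OF aH] by blast
  show ?thesis
    using that[of "int_iter a a'"] Vgrp_int_pow[OF G aG aH aa] incr_homeo_int_iter[OF aH incr_homeo_inverse[OF aH aa]]
      int_iter_inverse[OF aa] int_iter_succ[OF aa(1)] int_iter_comm[OF aa]
    by blast
qed


subsection \<open>Conjugates of b and the centralizers\<close>

lemma conjugate_rising_bump:
  assumes e: "incr_homeo r e" and ee': "e \<circ> e' = id" "e' \<circ> e = id"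
    and b: "incr_homeo r b" "supp r b = {u<..<v}" "\<forall>y\<in>supp r b. y < b y"
    and uv: "u \<in> {0..r}" "v \<in> {0..r}"
  shows "incr_homeo r (e \<circ> b \<circ> e')" "supp r (e \<circ> b \<circ> e') = {e u<..<e v}"
    "\<forall>x\<in>supp r (e \<circ> b \<circ> e'). x < (e \<circ> b \<circ> e') x"
proof -
  have e': "incr_homeo r e'" using incr_homeo_inverse[OF e ee'] .
  show "incr_homeo r (e \<circ> b \<circ> e')" using incr_homeo_comp e b(1) e' by blast
  have pointwise: "(e (b (e' x)) \<noteq> x \<longleftrightarrow> e u < x \<and> x < e v) \<and> (e (b (e' x)) \<noteq> x \<longrightarrow> x < e (b (e' x)))"
    if x: "x \<in> {0..<r}" for x
  proof -
    define y where "y = e' x"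
    have y: "y \<in> {0..<r}" using incr_homeo_maps[OF e' x] by (simp add: y_def)
    then have y': "y \<in> {0..r}" by simp
    have ey: "e y = x" using comp_id_apply[OF ee'(1)] by (simp add: y_def)
    have by': "b y \<in> {0..r}" using incr_homeo_maps_closed[OF b(1) y'] .
    have moved: "e (b y) \<noteq> x \<longleftrightarrow> y \<in> supp r b"
      using incr_homeo_eq[OF e by' y'] ey y by (simp add: supp_def)
    have "y \<in> supp r b \<longleftrightarrow> e u < x \<and> x < e v"
      using b(2) incr_homeo_less[OF e uv(1) y'] incr_homeo_less[OF e y' uv(2)] ey by simp
    moreover have "y \<in> supp r b \<Longrightarrow> x < e (b y)"
      using b(3) incr_homeo_less[OF e y' by'] ey by simp
    ultimately show ?thesis using moved by (simp add: y_def)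
  qed
  have bounds: "e u \<in> {0..r}" "e v \<in> {0..r}" using incr_homeo_maps_closed[OF e] uv by auto
  show "supp r (e \<circ> b \<circ> e') = {e u<..<e v}"
  proof (rule equalityI; rule subsetI)
    fix x assume "x \<in> supp r (e \<circ> b \<circ> e')"
    then show "x \<in> {e u<..<e v}" using pointwise by (auto simp: supp_def)
  next
    fix x assume x: "x \<in> {e u<..<e v}"
    then have "x \<in> {0..<r}" using bounds by auto
    then show "x \<in> supp r (e \<circ> b \<circ> e')" using pointwise[of x] x by (simp add: supp_def)
  qed
  show "\<forall>x\<in>supp r (e \<circ> b \<circ> e'). x < (e \<circ> b \<circ> e') x"
    using pointwise by (simp add: supp_def)
qed

lemma centralizer_reduction:
  assumes G: "subgroup G (Vgrp r {0<..} UNIV)" "G \<inter> F_set r {0<..} UNIV = F_set r \<Lambda> A"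
    and no_jump: "\<And>g p. g \<in> V_set r {0<..} UNIV \<Longrightarrow> \<forall>s\<in>S. g \<circ> s = s \<circ> g \<Longrightarrow> p \<in> {0<..<r}
                        \<Longrightarrow> \<not> left_jump g p"
  shows "centr G S = centr (F_set r \<Lambda> A) S"
proof
  show "centr (F_set r \<Lambda> A) S \<subseteq> centr G S" using G(2) unfolding centr_def by blast
  show "centr G S \<subseteq> centr (F_set r \<Lambda> A) S"
  proof
    fix g assume g: "g \<in> centr G S"
    then have gV: "g \<in> V_set r {0<..} UNIV"
      using subgroup.subset[OF G(1)] by (auto simp: centr_def Vgrp_carrier)
    have "continuous_on {0..<r} g"
      using V_continuous_if_no_left_jumps[OF gV] no_jump[OF gV] g by (simp add: centr_def)
    then have "g \<in> G \<inter> F_set r {0<..} UNIV" using g gV by (simp add: centr_def F_set_def)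
    then show "g \<in> centr (F_set r \<Lambda> A) S" using g G(2) by (simp add: centr_def)
  qed
qed

lemma centralizer_of_rising_homeo:
  assumes G: "subgroup G (Vgrp r {0<..} UNIV)" "G \<inter> F_set r {0<..} UNIV = F_set r \<Lambda> A"
    and a: "incr_homeo r a" "supp r a = {0<..<r}" "\<forall>x\<in>supp r a. x < a x"
  shows "centr G {a} = centr (F_set r \<Lambda> A) {a}"
  by (rule centralizer_reduction[OF G]) (use no_left_jump_in_rising_support a in auto)

text \<open>The second equality, for a chain of rising bumps C k with supports
  (alpha_k, alpha_(k+1)) whose closures cover (0,r): points inside a support are handled
  by the rising argument, the endpoints alpha_k by the two neighbouring bumps.\<close>
lemma centralizer_of_bump_chain:
  fixes C :: "int \<Rightarrow> real \<Rightarrow> real" and \<alpha> :: "int \<Rightarrow> real"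
  assumes G: "subgroup G (Vgrp r {0<..} UNIV)" "G \<inter> F_set r {0<..} UNIV = F_set r \<Lambda> A"
    and C: "\<And>k. incr_homeo r (C k)" "\<And>k. supp r (C k) = {\<alpha> k<..<\<alpha> (k+1)}"
      "\<And>k. \<forall>x\<in>supp r (C k). x < C k x"
    and \<alpha>: "\<And>k. \<alpha> k \<in> {0<..<r}" "\<And>k. \<alpha> k < \<alpha> (k+1)"
    and cover: "\<And>p. p \<in> {0<..<r} \<Longrightarrow> \<exists>k. \<alpha> k \<le> p \<and> p < \<alpha> (k+1)"
  shows "centr G (range C) = centr (F_set r \<Lambda> A) (range C)"
proof (rule centralizer_reduction[OF G])
  fix g p assume g: "g \<in> V_set r {0<..} UNIV" and "\<forall>s\<in>range C. g \<circ> s = s \<circ> g"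
    and p: "p \<in> {0<..<r}"
  then have comm: "g \<circ> C k = C k \<circ> g" for k by blast
  obtain k where k: "\<alpha> k \<le> p" "p < \<alpha> (k+1)" using cover[OF p] by blast
  show "\<not> left_jump g p"
  proof (cases "p = \<alpha> k")
    case False
    then have "p \<in> supp r (C k)" using k C(2) by auto
    then show ?thesis using no_left_jump_in_rising_support[OF g C(1) comm C(3)] by blast
  next
    case True
    have "supp r (C (k-1)) = {\<alpha> (k-1)<..<p}" using C(2)[of "k-1"] True by simp
    moreover have "0 \<le> \<alpha> (k-1)" "\<alpha> (k-1) < p" "\<alpha> (k+1) \<le> r"
      using \<alpha>(1)[of "k-1"] \<alpha>(2)[of "k-1"] \<alpha>(1)[of "k+1"] True by auto
    ultimately show ?thesis
      using no_left_jump_between_supports[OF g C(1) comm _ C(1) comm C(2)[of k]] k True by auto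
  qed
qed

text \<open>The conjugates E k o b o E (-k) of a rising bump b with support (alpha_0, a alpha_0)
  by the integer powers E k of a form a bump chain along the orbit alpha_k = E k alpha_0,
  which covers (0,r) because a rises on all of (0,r).\<close>
lemma centralizer_of_conjugates:
  fixes E :: "int \<Rightarrow> real \<Rightarrow> real"
  assumes G: "subgroup G (Vgrp r {0<..} UNIV)" "G \<inter> F_set r {0<..} UNIV = F_set r \<Lambda> A"
    and a: "incr_homeo r a" "supp r a = {0<..<r}" "\<forall>x\<in>supp r a. x < a x"
      "continuous_on {0..<r} a"
    and E: "\<And>k. incr_homeo r (E k)" "\<And>k. E k \<circ> E (- k) = id" "\<And>k. E (k + 1) = a \<circ> E k"
      "\<And>k. a \<circ> E k = E k \<circ> a"
    and b: "incr_homeo r b" "supp r b = {\<alpha>\<^sub>0<..<a \<alpha>\<^sub>0}" "\<forall>y\<in>supp r b. y < b y"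
    and alpha0: "\<alpha>\<^sub>0 \<in> {0<..<r}"
  shows "centr G (range (\<lambda>k. E k \<circ> b \<circ> E (- k)))
       = centr (F_set r \<Lambda> A) (range (\<lambda>k. E k \<circ> b \<circ> E (- k)))"
proof -
  define \<alpha> where "\<alpha> k = E k \<alpha>\<^sub>0" for k
  have \<alpha>_in: "\<alpha> k \<in> {0<..<r}" for k using incr_homeo_interior[OF E(1) alpha0] by (simp add: \<alpha>_def)
  have \<alpha>_step: "\<alpha> (k + 1) = a (\<alpha> k)" for k by (simp add: \<alpha>_def E(3))
  have \<alpha>_mono: "\<alpha> k < \<alpha> (k + 1)" for k using a(2,3) \<alpha>_in \<alpha>_step by auto
  have cover: "\<exists>k. \<alpha> k \<le> p \<and> p < \<alpha> (k + 1)" if "p \<in> {0<..<r}" for p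
    using orbit_covers[where \<alpha> = \<alpha>, OF a(4) _ \<alpha>_in \<alpha>_step that] a(2,3) by simp
  have "E k (a \<alpha>\<^sub>0) = \<alpha> (k + 1)" for k using comp_eq_dest[OF E(4)] by (simp add: \<alpha>_def E(3))
  moreover have "a \<alpha>\<^sub>0 \<in> {0..r}" using incr_homeo_maps_closed[OF a(1)] alpha0 by auto
  ultimately have C: "incr_homeo r (E k \<circ> b \<circ> E (- k))"
    "supp r (E k \<circ> b \<circ> E (- k)) = {\<alpha> k<..<\<alpha> (k+1)}"
    "\<forall>x\<in>supp r (E k \<circ> b \<circ> E (- k)). x < (E k \<circ> b \<circ> E (- k)) x" for k
    using conjugate_rising_bump[OF E(1) E(2) _ b, of k] E(2)[of "- k"] alpha0 by (auto simp: \<alpha>_def)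
  show ?thesis by (rule centralizer_of_bump_chain[OF G C \<alpha>_in \<alpha>_mono cover])
qed

theorem lemma4p7:
  fixes r :: real and \<Lambda> A :: "real set" and a b :: "real \<Rightarrow> real"
    and \<alpha>\<^sub>0 :: real and G :: "(real \<Rightarrow> real) set"
  assumes params: "std_params r \<Lambda> A"
    and a: "a \<in> F_up r \<Lambda> A" "supp r a = {0<..<r}"
    and alpha0: "\<alpha>\<^sub>0 \<in> {0<..<r}" "\<alpha>\<^sub>0 \<in> A"
    and b: "b \<in> F_up r \<Lambda> A"
       "supp r b = {\<alpha>\<^sub>0 <..< ((a [^]\<^bsub>Vgrp r {0<..} UNIV\<^esub> (1::int)) \<alpha>\<^sub>0)}"
    and G: "subgroup G (Vgrp r {0<..} UNIV)"
       "G \<inter> F_set r {0<..} UNIV = F_set r \<Lambda> A"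
  shows "centr G {a} = centr (F_set r \<Lambda> A) {a}
    \<and> centr G {(a [^]\<^bsub>Vgrp r {0<..} UNIV\<^esub> (-k)) \<otimes>\<^bsub>Vgrp r {0<..} UNIV\<^esub> b
                 \<otimes>\<^bsub>Vgrp r {0<..} UNIV\<^esub> (a [^]\<^bsub>Vgrp r {0<..} UNIV\<^esub> k) | k :: int. True}
      = centr (F_set r \<Lambda> A)
          {(a [^]\<^bsub>Vgrp r {0<..} UNIV\<^esub> (-k)) \<otimes>\<^bsub>Vgrp r {0<..} UNIV\<^esub> b
                 \<otimes>\<^bsub>Vgrp r {0<..} UNIV\<^esub> (a [^]\<^bsub>Vgrp r {0<..} UNIV\<^esub> k) | k :: int. True}"
proof -
  have r: "0 < r" using params by (simp add: std_params_def)
  have aG: "a \<in> G" using a(1) G(2) by (auto simp: F_up_def)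
  have a_homeo: "incr_homeo r a" and a_rising: "\<forall>x\<in>supp r a. x < a x"
    using F_up_rising_homeo[OF a(1) _ r] a(2) by auto
  obtain E where pow: "\<And>k. a [^]\<^bsub>Vgrp r {0<..} UNIV\<^esub> (k::int) = E k"
    and E: "\<And>k. incr_homeo r (E k)" "\<And>k. E k \<circ> E (- k) = id" "\<And>k. E (k + 1) = a \<circ> E k"
      "\<And>k. a \<circ> E k = E k \<circ> a"
    using Vgrp_int_powers[OF G(1) aG a_homeo] by blast
  have b_supp: "supp r b = {\<alpha>\<^sub>0<..<a \<alpha>\<^sub>0}"
    using b(2) by (simp add: int_pow_def2 Vgrp_def)
  have b_homeo: "incr_homeo r b" and b_rising: "\<forall>y\<in>supp r b. y < b y"
    using F_up_rising_homeo[OF b(1) _ r] b_supp alpha0 by auto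
  have a_cont: "continuous_on {0..<r} a" using a(1) by (simp add: F_up_def F_set_def)
  have conjugates: "{(a [^]\<^bsub>Vgrp r {0<..} UNIV\<^esub> (-k)) \<otimes>\<^bsub>Vgrp r {0<..} UNIV\<^esub> b
                 \<otimes>\<^bsub>Vgrp r {0<..} UNIV\<^esub> (a [^]\<^bsub>Vgrp r {0<..} UNIV\<^esub> k) | k :: int. True}
      = range (\<lambda>k. E k \<circ> b \<circ> E (- k))"
    by (auto simp: pow Vgrp_mult comp_assoc)
  show ?thesis
    unfolding conjugates
    using centralizer_of_rising_homeo[OF G a_homeo a(2) a_rising]
      centralizer_of_conjugates[OF G a_homeo a(2) a_rising a_cont E b_homeo b_supp b_rising alpha0(1)]
    by blast
qed

end
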